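(* Let $r\in\{0,1\}$. If a vector $(x_\alpha,\dots,x_1)$ is $r$-realizable, then every vector $(y_\alpha,\dots,y_1)$ with $x_i\le y_i$ for all $1\le i\le\alpha$ is $r$-realizable.
   Context: All graphs are finite, nonempty, and reflexive (every vertex has a loop). $N[v]$ is the closed neighborhood of $v$ (including $v$). For distinct $v,w$, $w$ strictly corners $v$ if $N[v]\subsetneq N[w]$; $v$ is then a strict corner. A vertex dominates a set if adjacent to all its vertices. Corner ranking: set $G^{(1)}=G$, $k=1$. If $G^{(k)}$ is a clique, give all its vertices rank $k$ and stop. Else if $G^{(k)}$ has no strict corners, give all its vertices rank $\infty$ and stop. Else give every strict corner of $G^{(k)}$ rank $k$, delete them to get $G^{(k+1)}$ (induced subgraph), increase $k$ and repeat. The corner rank is the largest rank of a vertex; $X_k$ is the set of rank-$k$ vertices. A graph is cop-win iff its corner rank is finite. A graph of finite corner rank $\alpha\ge2$ is of type 1 if some (equivalently every) vertex of rank $\alpha$ dominates $V(G^{(\alpha-1)})$, and of type 0 otherwise. A vector is a finite list of positive integers. The rank cardinality vector is $(x_\alpha,\dots,x_1)$ with $x_k=|X_k|$. A vector is $r$-realizable if it is the rank cardinality vector of some cop-win graph of type $r$. *)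

theory Defs
  imports Main
begin

definition is_graph :: "'a set \<Rightarrow> ('a \<Rightarrow> 'a \<Rightarrow> bool) \<Rightarrow> bool" where
  "is_graph V E \<longleftrightarrow> finite V \<and> V \<noteq> {} \<and> (\<forall>v\<in>V. E v v)
     \<and> (\<forall>v\<in>V. \<forall>w\<in>V. E v w \<longrightarrow> E w v)"

definition cnbh :: "('a \<Rightarrow> 'a \<Rightarrow> bool) \<Rightarrow> 'a set \<Rightarrow> 'a \<Rightarrow> 'a set" where
  "cnbh E S v = {w \<in> S. E v w}"

definition strict_corner :: "('a \<Rightarrow> 'a \<Rightarrow> bool) \<Rightarrow> 'a set \<Rightarrow> 'a \<Rightarrow> bool" where
  "strict_corner E S v \<longleftrightarrow> v \<in> S \<and> (\<exists>w\<in>S. w \<noteq> v \<and> cnbh E S v \<subset> cnbh E S w)"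

definition is_clique :: "('a \<Rightarrow> 'a \<Rightarrow> bool) \<Rightarrow> 'a set \<Rightarrow> bool" where
  "is_clique E S \<longleftrightarrow> (\<forall>v\<in>S. \<forall>w\<in>S. E v w)"

text \<open>stage E V k is the vertex set of G^(k+1) (once G^(k) is a clique, the
  later stages are empty).\<close>
primrec stage :: "('a \<Rightarrow> 'a \<Rightarrow> bool) \<Rightarrow> 'a set \<Rightarrow> nat \<Rightarrow> 'a set" where
  "stage E V 0 = V"
| "stage E V (Suc k) = (if is_clique E (stage E V k) then {}
      else stage E V k - {v. strict_corner E (stage E V k) v})"

definition rank_set :: "('a \<Rightarrow> 'a \<Rightarrow> bool) \<Rightarrow> 'a set \<Rightarrow> nat \<Rightarrow> 'a set" where
  "rank_set E V k = (if k = 0 then {} else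
     {v \<in> stage E V (k - 1). is_clique E (stage E V (k - 1)) \<or> strict_corner E (stage E V (k - 1)) v})"

definition finite_corner_rank :: "'a set \<Rightarrow> ('a \<Rightarrow> 'a \<Rightarrow> bool) \<Rightarrow> bool" where
  "finite_corner_rank V E \<longleftrightarrow> (\<exists>k. stage E V k = {})"

definition corner_rank :: "'a set \<Rightarrow> ('a \<Rightarrow> 'a \<Rightarrow> bool) \<Rightarrow> nat" where
  "corner_rank V E = Max {k. rank_set E V k \<noteq> {}}"

definition type1 :: "'a set \<Rightarrow> ('a \<Rightarrow> 'a \<Rightarrow> bool) \<Rightarrow> bool" where
  "type1 V E \<longleftrightarrow> finite_corner_rank V E \<and> corner_rank V E \<ge> 2 \<and>
     (\<exists>v\<in>rank_set E V (corner_rank V E). \<forall>w\<in>stage E V (corner_rank V E - 2). E v w)"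

definition type0 :: "'a set \<Rightarrow> ('a \<Rightarrow> 'a \<Rightarrow> bool) \<Rightarrow> bool" where
  "type0 V E \<longleftrightarrow> finite_corner_rank V E \<and> corner_rank V E \<ge> 2 \<and> \<not> type1 V E"

definition has_type :: "'a set \<Rightarrow> ('a \<Rightarrow> 'a \<Rightarrow> bool) \<Rightarrow> nat \<Rightarrow> bool" where
  "has_type V E r \<longleftrightarrow> (r = 1 \<and> type1 V E) \<or> (r = 0 \<and> type0 V E)"

definition rank_card_vector :: "'a set \<Rightarrow> ('a \<Rightarrow> 'a \<Rightarrow> bool) \<Rightarrow> nat list" where
  "rank_card_vector V E = map (\<lambda>k. card (rank_set E V k)) (rev [1..<corner_rank V E + 1])"

text \<open>Vertices are taken from nat; every finite graph is isomorphic to one on nat.\<close>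
definition realizable :: "nat \<Rightarrow> nat list \<Rightarrow> bool" where
  "realizable r xs \<longleftrightarrow> (\<exists>(V::nat set) E. is_graph V E \<and> finite_corner_rank V E
      \<and> has_type V E r \<and> rank_card_vector V E = xs)"

end

theory Submission
  imports Defs
begin

text \<open>Give a vertex v of rank k a twin: a fresh vertex n with the same closed
neighbourhood as v. The twin graph is the pullback of G along the surjection
collapsing n onto v, and the whole corner ranking commutes with such pullbacks,
because cliques and strict inclusions of neighbourhoods are reflected by preimages
under a surjection. Hence the twin graph has the same corner rank and type as G,
and its rank sets are the preimages of those of G: only X_k grows, by one.
Repeating this raises the entries of a realizable vector one unit at a time.\<close>

definition pull :: "('a \<Rightarrow> 'a \<Rightarrow> bool) \<Rightarrow> ('b \<Rightarrow> 'a) \<Rightarrow> 'b \<Rightarrow> 'b \<Rightarrow> bool" where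
  "pull E f x y \<longleftrightarrow> E (f x) (f y)"

lemma stage_subset: "stage E V k \<subseteq> V"
  by (induction k) auto

lemma stage_antimono: "m \<le> n \<Longrightarrow> stage E V n \<subseteq> stage E V m"
  by (induction n rule: dec_induct) auto

lemma rank_set_subset_stage: "rank_set E V k \<subseteq> stage E V (k - 1)"
  unfolding rank_set_def by auto

lemma rank_set_subset: "rank_set E V k \<subseteq> V"
  using rank_set_subset_stage[of E V k] stage_subset[of E V "k - 1"] by (rule order_trans)

context
  fixes f :: "'b \<Rightarrow> 'a" and V :: "'a set" and V' :: "'b set" and E :: "'a \<Rightarrow> 'a \<Rightarrow> bool"
  assumes surj: "f ` V' = V"
begin

lemma vimage_subset_iff:
  assumes "A \<subseteq> V"
  shows "V' \<inter> f -` A \<subseteq> V' \<inter> f -` B \<longleftrightarrow> A \<subseteq> B"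
  using assms surj by blast

lemma vimage_psubset_iff:
  assumes "A \<subseteq> V" "B \<subseteq> V"
  shows "V' \<inter> f -` A \<subset> V' \<inter> f -` B \<longleftrightarrow> A \<subset> B"
  using vimage_subset_iff[OF assms(1), of B] vimage_subset_iff[OF assms(2), of A]
  by (auto simp: less_le_not_le)

lemma vimage_empty_iff:
  assumes "A \<subseteq> V"
  shows "V' \<inter> f -` A = {} \<longleftrightarrow> A = {}"
  using assms surj by blast

lemma cnbh_pull: "cnbh (pull E f) (V' \<inter> f -` S) x = V' \<inter> f -` cnbh E S (f x)"
  unfolding cnbh_def pull_def by auto

lemma is_clique_pull:
  assumes "S \<subseteq> V"
  shows "is_clique (pull E f) (V' \<inter> f -` S) \<longleftrightarrow> is_clique E S"
  using assms surj unfolding is_clique_def pull_def by (auto, blast)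

lemma strict_corner_pull:
  assumes "S \<subseteq> V"
  shows "strict_corner (pull E f) (V' \<inter> f -` S) x \<longleftrightarrow> x \<in> V' \<and> strict_corner E S (f x)"
proof -
  let ?S' = "V' \<inter> f -` S"
  have psub: "cnbh (pull E f) ?S' u \<subset> cnbh (pull E f) ?S' w \<longleftrightarrow> cnbh E S (f u) \<subset> cnbh E S (f w)"
    for u w
    unfolding cnbh_pull by (rule vimage_psubset_iff) (use assms in \<open>auto simp: cnbh_def\<close>)
  have "(\<exists>w\<in>?S'. w \<noteq> x \<and> cnbh (pull E f) ?S' x \<subset> cnbh (pull E f) ?S' w)
      \<longleftrightarrow> (\<exists>b\<in>S. b \<noteq> f x \<and> cnbh E S (f x) \<subset> cnbh E S b)"
  proof
    assume "\<exists>w\<in>?S'. w \<noteq> x \<and> cnbh (pull E f) ?S' x \<subset> cnbh (pull E f) ?S' w"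
    then obtain w where "w \<in> ?S'" "cnbh E S (f x) \<subset> cnbh E S (f w)"
      unfolding psub by blast
    then show "\<exists>b\<in>S. b \<noteq> f x \<and> cnbh E S (f x) \<subset> cnbh E S b"
      by (intro bexI[of _ "f w"]) auto
  next
    assume "\<exists>b\<in>S. b \<noteq> f x \<and> cnbh E S (f x) \<subset> cnbh E S b"
    then obtain b where b: "b \<in> S" "cnbh E S (f x) \<subset> cnbh E S b" by blast
    moreover obtain w where "w \<in> V'" "f w = b" using b assms surj by blast
    ultimately have "w \<in> ?S'" "w \<noteq> x" "cnbh (pull E f) ?S' x \<subset> cnbh (pull E f) ?S' w"
      unfolding psub by auto
    then show "\<exists>w\<in>?S'. w \<noteq> x \<and> cnbh (pull E f) ?S' x \<subset> cnbh (pull E f) ?S' w"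
      by blast
  qed
  then show ?thesis unfolding strict_corner_def by auto
qed

lemma stage_pull: "stage (pull E f) V' k = V' \<inter> f -` stage E V k"
proof (induction k)
  case 0
  then show ?case using surj by auto
next
  case (Suc k)
  then show ?case
    using is_clique_pull[OF stage_subset] strict_corner_pull[OF stage_subset] by auto
qed

lemma rank_set_pull: "rank_set (pull E f) V' k = V' \<inter> f -` rank_set E V k"
  unfolding rank_set_def stage_pull
  using is_clique_pull[OF stage_subset] strict_corner_pull[OF stage_subset] by auto

lemma finite_corner_rank_pull: "finite_corner_rank V' (pull E f) \<longleftrightarrow> finite_corner_rank V E"
  unfolding finite_corner_rank_def stage_pull using vimage_empty_iff[OF stage_subset] by auto

lemma corner_rank_pull: "corner_rank V' (pull E f) = corner_rank V E"
  unfolding corner_rank_def rank_set_pull using vimage_empty_iff[OF rank_set_subset] by auto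

lemma dominates_pull:
  assumes "A \<subseteq> V" "B \<subseteq> V"
  shows "(\<exists>x\<in>V' \<inter> f -` A. \<forall>y\<in>V' \<inter> f -` B. pull E f x y) \<longleftrightarrow> (\<exists>a\<in>A. \<forall>b\<in>B. E a b)"
proof
  assume "\<exists>a\<in>A. \<forall>b\<in>B. E a b"
  then obtain a where a: "a \<in> A" "\<forall>b\<in>B. E a b" by blast
  moreover obtain x where "x \<in> V'" "f x = a" using a assms surj by blast
  ultimately show "\<exists>x\<in>V' \<inter> f -` A. \<forall>y\<in>V' \<inter> f -` B. pull E f x y"
    unfolding pull_def by auto
next
  assume "\<exists>x\<in>V' \<inter> f -` A. \<forall>y\<in>V' \<inter> f -` B. pull E f x y"
  then obtain x where x: "x \<in> V' \<inter> f -` A" "\<forall>y\<in>V' \<inter> f -` B. E (f x) (f y)"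
    unfolding pull_def by blast
  have "E (f x) b" if "b \<in> B" for b
  proof -
    obtain y where "y \<in> V'" "f y = b" using \<open>b \<in> B\<close> assms surj by blast
    then show ?thesis using x that by auto
  qed
  then show "\<exists>a\<in>A. \<forall>b\<in>B. E a b" using x by blast
qed

lemma has_type_pull: "has_type V' (pull E f) r \<longleftrightarrow> has_type V E r"
  unfolding has_type_def type0_def type1_def finite_corner_rank_pull corner_rank_pull
    rank_set_pull stage_pull dominates_pull[OF rank_set_subset stage_subset] ..

lemma is_graph_pull:
  assumes "is_graph V E" "finite V'"
  shows "is_graph V' (pull E f)"
proof -
  have "f x \<in> V" if "x \<in> V'" for x using that surj by blast
  moreover have "V' \<noteq> {}" using assms(1) surj unfolding is_graph_def by blast
  ultimately show ?thesis using assms unfolding is_graph_def pull_def by simp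
qed

end

lemma stage_stationary:
  assumes "stage E V (Suc k) = stage E V k"
  shows "stage E V (k + j) = stage E V k"
proof (induction j)
  case (Suc j)
  have "stage E V (Suc (k + j)) = stage E V (Suc k)"
    by (simp only: stage.simps(2) Suc)
  with assms show ?case by (simp only: add_Suc_right)
qed simp

lemma rank_set_Suc_nonempty:
  assumes "finite_corner_rank V E" "stage E V k \<noteq> {}"
  shows "rank_set E V (Suc k) \<noteq> {}"
proof
  assume empty: "rank_set E V (Suc k) = {}"
  then have "stage E V (Suc k) = stage E V k"
    using assms(2) unfolding rank_set_def by auto
  then have "stage E V (k + j) \<noteq> {}" for j
    using stage_stationary assms(2) by metis
  moreover obtain m where "stage E V m = {}"
    using assms(1) unfolding finite_corner_rank_def by auto
  ultimately show False using stage_antimono[of m "k + m" E V] by auto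
qed

lemma rank_set_disjoint_stage: "v \<in> rank_set E V k \<Longrightarrow> v \<notin> stage E V k"
  unfolding rank_set_def by (cases k) auto

lemma rank_set_unique:
  assumes "v \<in> rank_set E V k" "v \<in> rank_set E V l"
  shows "k = l"
proof -
  have "\<not> k < l" if "v \<in> rank_set E V k" "v \<in> rank_set E V l" for k l
    using that rank_set_subset_stage[of E V l] stage_antimono[of k "l - 1" E V]
      rank_set_disjoint_stage[of v E V k] by fastforce
  then show ?thesis using assms by (meson linorder_neqE_nat)
qed

lemma finite_nonempty_ranks:
  assumes "finite_corner_rank V E"
  shows "finite {k. rank_set E V k \<noteq> {}}"
proof -
  obtain m where m: "stage E V m = {}"
    using assms unfolding finite_corner_rank_def by auto
  have "k \<le> m" if "rank_set E V k \<noteq> {}" for k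
    using that rank_set_subset_stage[of E V k] stage_antimono[of m "k - 1" E V] m
    by (cases "m \<le> k - 1") auto
  then show ?thesis by (blast intro: finite_subset[of _ "{..m}"])
qed

lemma le_corner_rank:
  assumes "finite_corner_rank V E" "rank_set E V k \<noteq> {}"
  shows "k \<le> corner_rank V E"
  unfolding corner_rank_def using finite_nonempty_ranks[OF assms(1)] assms(2) by simp

lemma rank_set_nonempty:
  assumes "finite_corner_rank V E" "V \<noteq> {}" "1 \<le> k" "k \<le> corner_rank V E"
  shows "rank_set E V k \<noteq> {}"
proof -
  have "rank_set E V 1 \<noteq> {}"
    using rank_set_Suc_nonempty[OF assms(1), of 0] assms(2) by simp
  then have "rank_set E V (corner_rank V E) \<noteq> {}"
    using Max_in[OF finite_nonempty_ranks[OF assms(1)]] unfolding corner_rank_def by blast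
  then have "stage E V (corner_rank V E - 1) \<noteq> {}"
    using rank_set_subset_stage[of E V "corner_rank V E"] by blast
  moreover have "stage E V (corner_rank V E - 1) \<subseteq> stage E V (k - 1)"
    using assms(4) by (intro stage_antimono) simp
  ultimately have "stage E V (k - 1) \<noteq> {}" by blast
  from rank_set_Suc_nonempty[OF assms(1) this] show ?thesis
    using assms(3) by simp
qed

lemma length_rank_card_vector: "length (rank_card_vector V E) = corner_rank V E"
  unfolding rank_card_vector_def by simp

lemma nth_rank_card_vector:
  assumes "i < corner_rank V E"
  shows "rank_card_vector V E ! i = card (rank_set E V (corner_rank V E - i))"
  using assms unfolding rank_card_vector_def by (simp add: rev_nth Suc_diff_Suc del: upt_Suc)

lemma rank_set_twin:
  assumes "v \<in> V" "n \<notin> V"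
  defines "f \<equiv> \<lambda>x. if x = n then v else x"
  shows "rank_set (pull E f) (insert n V) k =
    (if v \<in> rank_set E V k then insert n (rank_set E V k) else rank_set E V k)"
proof -
  have "f ` insert n V = V" using assms by auto
  then have "rank_set (pull E f) (insert n V) k = insert n V \<inter> f -` rank_set E V k"
    by (rule rank_set_pull)
  also have "\<dots> = (if v \<in> rank_set E V k then insert n (rank_set E V k) else rank_set E V k)"
    using rank_set_subset[of E V k] assms by (auto split: if_splits)
  finally show ?thesis .
qed

lemma rank_card_vector_twin:
  assumes "is_graph V E" "finite_corner_rank V E" "v \<in> rank_set E V k" "n \<notin> V"
  defines "f \<equiv> \<lambda>x. if x = n then v else x"
    and "i \<equiv> corner_rank V E - k"
  shows "rank_card_vector (insert n V) (pull E f) =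
    (rank_card_vector V E)[i := Suc (rank_card_vector V E ! i)]"
proof -
  have "v \<in> V" using assms(3) rank_set_subset[of E V k] by blast
  then have surj: "f ` insert n V = V" using assms(4) unfolding f_def by auto
  have fin: "finite (rank_set E V l)" for l
    using assms(1) rank_set_subset[of E V l] unfolding is_graph_def by (blast intro: finite_subset)
  have "card (rank_set (pull E f) (insert n V) l) = card (rank_set E V l) + (if l = k then 1 else 0)"
    for l
  proof (cases "l = k")
    case True
    moreover have "n \<notin> rank_set E V l" using assms(4) rank_set_subset[of E V l] by blast
    ultimately show ?thesis
      using rank_set_twin[OF \<open>v \<in> V\<close> assms(4), of E l] assms(3) fin[of l] unfolding f_def by simp
  next
    case False
    then have "v \<notin> rank_set E V l" using rank_set_unique[OF assms(3), of l] by blast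
    then show ?thesis
      using rank_set_twin[OF \<open>v \<in> V\<close> assms(4), of E l] False unfolding f_def by simp
  qed
  moreover have "k \<noteq> 0" using assms(3) unfolding rank_set_def by (auto split: if_splits)
  moreover have "k \<le> corner_rank V E" using le_corner_rank[OF assms(2)] assms(3) by blast
  ultimately show ?thesis
    unfolding i_def
    by (intro nth_equalityI)
      (auto simp: length_rank_card_vector nth_rank_card_vector corner_rank_pull[OF surj] nth_list_update)
qed

lemma realizable_increment:
  assumes "realizable r xs" "i < length xs"
  shows "realizable r (xs[i := Suc (xs ! i)])"
proof -
  obtain V :: "nat set" and E where graph: "is_graph V E" and fcr: "finite_corner_rank V E"
    and type: "has_type V E r" and xs: "rank_card_vector V E = xs"
    using assms(1) unfolding realizable_def by blast
  have len: "length xs = corner_rank V E" using xs length_rank_card_vector by blast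
  define k where "k = corner_rank V E - i"
  have i: "i = corner_rank V E - k"
    using assms(2) len unfolding k_def by simp
  have "V \<noteq> {}" "finite V" using graph unfolding is_graph_def by auto
  moreover have "1 \<le> k" "k \<le> corner_rank V E"
    using assms(2) len unfolding k_def by auto
  ultimately obtain v where v: "v \<in> rank_set E V k"
    using rank_set_nonempty[OF fcr] by blast
  obtain n :: nat where n: "n \<notin> V" using ex_new_if_finite \<open>finite V\<close> by blast
  define f where "f = (\<lambda>x. if x = n then v else x)"
  have surj: "f ` insert n V = V"
    using v rank_set_subset[of E V k] n unfolding f_def by auto
  have "is_graph (insert n V) (pull E f)"
    using is_graph_pull[OF surj graph] \<open>finite V\<close> by simp
  moreover have "finite_corner_rank (insert n V) (pull E f)" "has_type (insert n V) (pull E f) r"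
    using finite_corner_rank_pull[OF surj] fcr has_type_pull[OF surj] type by auto
  moreover have "rank_card_vector (insert n V) (pull E f) = xs[i := Suc (xs ! i)]"
    using rank_card_vector_twin[OF graph fcr v n] unfolding f_def i xs .
  ultimately show ?thesis unfolding realizable_def by blast
qed

lemma upward_closed_if_increment_closed:
  fixes P :: "nat list \<Rightarrow> bool"
  assumes step: "\<And>xs i. P xs \<Longrightarrow> i < length xs \<Longrightarrow> P (xs[i := Suc (xs ! i)])"
    and "P xs" "length ys = length xs" "\<forall>i < length xs. xs ! i \<le> ys ! i"
  shows "P ys"
  using assms(2-)
proof (induction "\<Sum>i<length xs. ys ! i - xs ! i" arbitrary: xs rule: less_induct)
  case less
  show ?case
  proof (cases "xs = ys")
    case True
    with less.prems show ?thesis by simp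
  next
    case False
    then obtain i where i: "i < length xs" "xs ! i < ys ! i"
      using less.prems nth_equalityI[of xs ys] by (metis le_neq_implies_less)
    let ?xs = "xs[i := Suc (xs ! i)]"
    have "(\<Sum>j<length xs. ys ! j - ?xs ! j) < (\<Sum>j<length xs. ys ! j - xs ! j)"
      using i by (intro sum_strict_mono_ex1) (auto simp: nth_list_update intro!: bexI[of _ i])
    moreover have "\<forall>j < length ?xs. ?xs ! j \<le> ys ! j"
      using i less.prems by (auto simp: nth_list_update)
    ultimately show ?thesis
      using less.hyps[of ?xs] step[OF less.prems(1) i(1)] less.prems(2) by simp
  qed
qed

theorem lemma3p6:
  fixes r :: nat and xs ys :: "nat list"
  assumes "r \<in> {0, 1}"
    and "realizable r xs"
    and "length ys = length xs"
    and "\<forall>i < length xs. xs ! i \<le> ys ! i"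
  shows "realizable r ys"
  using upward_closed_if_increment_closed[of "realizable r", OF realizable_increment] assms(2-)
  by blast

end
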